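(* Let $\mathcal{X}$ be a set, $\mathcal{D}$ a distribution on $\mathcal{X}\times[0,1]^N$, $f,f^\star:\mathcal{X}\to[0,1]^N$ two functions, $q:\mathcal{X}\times[0,1]^N\to\Delta(\mathcal{S})$ a stochastic policy and $\pi:\mathcal{X}\times[0,1]^N\to\mathcal{S}$ a deterministic policy. Then $$\Big|\mathbb{E}_{(x,r)\sim\mathcal{D}}\big[R(\pi(x,r),f(x),r)\big]-\mathbb{E}_{(x,r)\sim\mathcal{D}}\big[R(\pi(x,r),f^\star(x),r)\big]\Big|\le\sqrt{V(q,\pi)}\cdot\sqrt{\mathbb{E}_{(x,r)\sim\mathcal{D},\,S\sim q(x,r)}\Big[\sum_{i\in S}(f_i(x)-f_i^\star(x))^2\Big]}.$$
   Context: $N\ge K\ge1$ are integers and $\mathcal{S}$ is the collection of subsets $S\subseteq[N]$ with $1\le|S|\le K$; $\Delta(\mathcal{S})$ is the set of probability distributions on $\mathcal{S}$. For $S\in\mathcal{S}$, $v\in[0,1]^N$, $r\in[0,1]^N$, $R(S,v,r)=\frac{\sum_{i\in S}r_iv_i}{1+\sum_{i\in S}v_i}$. For $\rho\in\Delta(\mathcal{S})$, $w_i(\rho)=\sum_{S\in\mathcal{S}:\,i\in S}\rho(S)$. The dispersion is $V(q,\pi)=\mathbb{E}_{(x,r)\sim\mathcal{D}}\big[\sum_{i\in\pi(x,r)}\frac{1}{w_i(q(x,r))}\big]$ (with $1/0=+\infty$). *)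

theory Defs
  imports "HOL-Probability.Probability"
begin

text \<open>Items are indexed by [N] = {1..N}; utility/revenue vectors are functions nat => real
  (only the coordinates in {1..N} matter).\<close>

definition assortments :: "nat \<Rightarrow> nat \<Rightarrow> nat set set" where
  "assortments N K = {S. S \<subseteq> {1..N} \<and> 1 \<le> card S \<and> card S \<le> K}"

definition revenue :: "nat set \<Rightarrow> (nat \<Rightarrow> real) \<Rightarrow> (nat \<Rightarrow> real) \<Rightarrow> real" where
  "revenue S v r = (\<Sum>i\<in>S. r i * v i) / (1 + (\<Sum>i\<in>S. v i))"

definition weight :: "nat set pmf \<Rightarrow> nat \<Rightarrow> real" where
  "weight \<rho> i = measure_pmf.prob \<rho> {S. i \<in> S}"

definition inv_weight :: "nat set pmf \<Rightarrow> nat \<Rightarrow> ennreal" where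
  "inv_weight \<rho> i = (if weight \<rho> i = 0 then \<infinity> else ennreal (1 / weight \<rho> i))"

definition dispersion ::
  "('x \<times> (nat \<Rightarrow> real)) measure \<Rightarrow> ('x \<times> (nat \<Rightarrow> real) \<Rightarrow> nat set pmf)
     \<Rightarrow> ('x \<times> (nat \<Rightarrow> real) \<Rightarrow> nat set) \<Rightarrow> ennreal" where
  "dispersion D q \<pi> = (\<integral>\<^sup>+ xr. (\<Sum>i\<in>\<pi> xr. inv_weight (q xr) i) \<partial>D)"

end

theory Submission
  imports Defs
begin

text \<open>
  Clearing denominators shows that the MNL revenue of a fixed assortment is 1-Lipschitz in the
  utility vector for the l1 distance on that assortment, so the revenue gap is at most the
  expected l1 gap \<open>\<Sum>i\<in>\<pi>. \<bar>f i - f\<^sup>\<star> i\<bar>\<close>. Weighted Cauchy-Schwarz with the inclusion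
  probabilities \<open>w i\<close> of \<open>q\<close> bounds this gap by
  \<open>sqrt (\<Sum>i\<in>\<pi>. 1 / w i) * sqrt (\<Sum>i. w i * (f i - f\<^sup>\<star> i)\<^sup>2)\<close>, and the last sum is at most
  the expectation of \<open>\<Sum>i\<in>S. (f i - f\<^sup>\<star> i)\<^sup>2\<close> for \<open>S \<sim> q\<close>. A second Cauchy-Schwarz
  inequality, for the integral over \<open>D\<close>, finishes the proof.
\<close>

lemma revenue_nonneg:
  assumes "\<forall>i\<in>S. 0 \<le> r i" "\<forall>i\<in>S. 0 \<le> v i"
  shows "0 \<le> revenue S v r"
  using assms by (simp add: revenue_def sum_nonneg)

lemma revenue_le_one:
  assumes "\<forall>i\<in>S. r i \<le> 1" "\<forall>i\<in>S. 0 \<le> v i"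
  shows "revenue S v r \<le> 1"
proof -
  have "(\<Sum>i\<in>S. r i * v i) \<le> (\<Sum>i\<in>S. v i)"
    using assms by (intro sum_mono) (metis mult_1 mult_right_mono)
  moreover have "0 \<le> (\<Sum>i\<in>S. v i)"
    using assms(2) by (simp add: sum_nonneg)
  ultimately show ?thesis
    by (simp add: revenue_def divide_le_eq)
qed

lemma abs_revenue_diff_le:
  assumes r: "\<forall>i\<in>S. r i \<in> {0..1}" and v: "\<forall>i\<in>S. 0 \<le> v i" and v': "\<forall>i\<in>S. 0 \<le> v' i"
  shows "\<bar>revenue S v r - revenue S v' r\<bar> \<le> (\<Sum>i\<in>S. \<bar>v i - v' i\<bar>)"
proof -
  define R where "R = revenue S v r"
  define B' where "B' = 1 + (\<Sum>i\<in>S. v' i)"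
  have R: "0 \<le> R" "R \<le> 1"
    using r v revenue_nonneg[of S r v] revenue_le_one[of S r v] by (auto simp: R_def)
  have B': "1 \<le> B'"
    using v' by (simp add: B'_def sum_nonneg)
  have "0 \<le> (\<Sum>i\<in>S. v i)"
    using v by (simp add: sum_nonneg)
  then have "R * (1 + (\<Sum>i\<in>S. v i)) = (\<Sum>i\<in>S. r i * v i)"
    by (simp add: R_def revenue_def)
  moreover have "revenue S v' r * B' = (\<Sum>i\<in>S. r i * v' i)"
    using B' by (simp add: revenue_def B'_def)
  moreover have "(\<Sum>i\<in>S. (v i - v' i) * (r i - R))
      = (\<Sum>i\<in>S. r i * v i) - R * (\<Sum>i\<in>S. v i) + R * (\<Sum>i\<in>S. v' i) - (\<Sum>i\<in>S. r i * v' i)"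
    by (simp add: algebra_simps sum_subtractf sum.distrib sum_distrib_left)
  \<comment> \<open>Clearing the denominators leaves the item gaps weighted by r i - R, which lies in [-1,1].\<close>
  ultimately have "(R - revenue S v' r) * B' = (\<Sum>i\<in>S. (v i - v' i) * (r i - R))"
    by (simp add: B'_def algebra_simps)
  also have "\<bar>\<dots>\<bar> \<le> (\<Sum>i\<in>S. \<bar>v i - v' i\<bar>)"
    using r R by (intro order_trans[OF sum_abs] sum_mono) (auto simp: abs_mult mult_left_le)
  finally have "\<bar>R - revenue S v' r\<bar> * B' \<le> (\<Sum>i\<in>S. \<bar>v i - v' i\<bar>)"
    using B' by (simp add: abs_mult)
  then show ?thesis
    using B' unfolding R_def by (smt (verit) mult_le_cancel_left1 abs_ge_zero)
qed

lemma Cauchy_Schwarz_ineq_sum_weighted: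
  fixes c w :: "'a \<Rightarrow> real"
  assumes "\<And>i. i \<in> P \<Longrightarrow> 0 < w i"
  shows "(\<Sum>i\<in>P. \<bar>c i\<bar>) \<le> sqrt (\<Sum>i\<in>P. 1 / w i) * sqrt (\<Sum>i\<in>P. w i * (c i)\<^sup>2)"
proof -
  have "\<bar>c i\<bar> = (1 / sqrt (w i)) * (sqrt (w i) * \<bar>c i\<bar>)" if "i \<in> P" for i
    using assms[OF that] by simp
  then have "(\<Sum>i\<in>P. \<bar>c i\<bar>) = (\<Sum>i\<in>P. (1 / sqrt (w i)) * (sqrt (w i) * \<bar>c i\<bar>))"
    by (rule sum.cong[OF refl])
  also have "\<dots> \<le> sqrt ((\<Sum>i\<in>P. (1 / sqrt (w i))\<^sup>2) * (\<Sum>i\<in>P. (sqrt (w i) * \<bar>c i\<bar>)\<^sup>2))"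
    by (rule real_le_rsqrt, rule Cauchy_Schwarz_ineq_sum)
  also have "\<dots> = sqrt (\<Sum>i\<in>P. 1 / w i) * sqrt (\<Sum>i\<in>P. w i * (c i)\<^sup>2)"
    using assms by (simp add: real_sqrt_mult power_divide power_mult_distrib less_imp_le)
  finally show ?thesis .
qed

lemma weight_eq_sum_pmf:
  assumes "finite A" "set_pmf p \<subseteq> A"
  shows "weight p i = (\<Sum>S\<in>A. pmf p S * of_bool (i \<in> S))"
proof -
  have "weight p i = measure_pmf.expectation p (indicator {S. i \<in> S})"
    by (simp add: weight_def)
  also have "\<dots> = (\<Sum>S\<in>A. pmf p S * indicator {S. i \<in> S} S)"
    using assms by (subst integral_measure_pmf[OF assms(1)]) auto
  finally show ?thesis
    by (simp add: indicator_def)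
qed

lemma sum_weight_mult_le_expectation:
  fixes c :: "nat \<Rightarrow> real"
  assumes A: "finite A" "set_pmf p \<subseteq> A" "\<And>S. S \<in> A \<Longrightarrow> finite S"
    and "finite P" "\<And>i. 0 \<le> c i"
  shows "(\<Sum>i\<in>P. weight p i * c i) \<le> measure_pmf.expectation p (\<lambda>S. \<Sum>i\<in>S. c i)"
proof -
  have "weight p i * c i = (\<Sum>S\<in>A. pmf p S * (if i \<in> S then c i else 0))" for i
    by (auto simp: weight_eq_sum_pmf[OF A(1,2)] sum_distrib_right intro!: sum.cong)
  then have "(\<Sum>i\<in>P. weight p i * c i) = (\<Sum>S\<in>A. pmf p S * (\<Sum>i\<in>P. if i \<in> S then c i else 0))"
    by (simp add: sum.swap[of _ P] sum_distrib_left)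
  also have "\<dots> = (\<Sum>S\<in>A. pmf p S * (\<Sum>i\<in>P \<inter> S. c i))"
    using assms(4) by (simp add: sum.inter_restrict)
  also have "\<dots> \<le> (\<Sum>S\<in>A. pmf p S * (\<Sum>i\<in>S. c i))"
    using assms by (intro sum_mono mult_left_mono sum_mono2) auto
  also have "\<dots> = measure_pmf.expectation p (\<lambda>S. \<Sum>i\<in>S. c i)"
    using A by (subst integral_measure_pmf[OF A(1)]) auto
  finally show ?thesis .
qed

lemma sum_abs_le_sqrt_inv_weight_mult_sqrt_expectation:
  fixes c :: "nat \<Rightarrow> real"
  assumes A: "finite A" "set_pmf p \<subseteq> A" "\<And>S. S \<in> A \<Longrightarrow> finite S"
    and P: "finite P" "(\<Sum>i\<in>P. inv_weight p i) \<noteq> \<infinity>"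
  shows "(\<Sum>i\<in>P. \<bar>c i\<bar>) \<le> sqrt (enn2real (\<Sum>i\<in>P. inv_weight p i))
           * sqrt (measure_pmf.expectation p (\<lambda>S. \<Sum>i\<in>S. (c i)\<^sup>2))"
proof -
  have pos: "0 < weight p i" if "i \<in> P" for i
    using P that weight_def[of p i] by (auto simp: inv_weight_def less_le)
  have "inv_weight p i = ennreal (1 / weight p i)" if "i \<in> P" for i
    using pos[OF that] by (simp add: inv_weight_def)
  then have "(\<Sum>i\<in>P. inv_weight p i) = (\<Sum>i\<in>P. ennreal (1 / weight p i))"
    by (rule sum.cong[OF refl])
  also have "\<dots> = ennreal (\<Sum>i\<in>P. 1 / weight p i)"
    using pos by (simp add: less_imp_le)
  finally have "(\<Sum>i\<in>P. inv_weight p i) = ennreal (\<Sum>i\<in>P. 1 / weight p i)" .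
  then have enn2real_sum: "enn2real (\<Sum>i\<in>P. inv_weight p i) = (\<Sum>i\<in>P. 1 / weight p i)"
    using pos by (simp add: sum_nonneg less_imp_le)
  have "(\<Sum>i\<in>P. \<bar>c i\<bar>) \<le> sqrt (\<Sum>i\<in>P. 1 / weight p i) * sqrt (\<Sum>i\<in>P. weight p i * (c i)\<^sup>2)"
    using pos by (rule Cauchy_Schwarz_ineq_sum_weighted)
  also have "\<dots> \<le> sqrt (\<Sum>i\<in>P. 1 / weight p i) * sqrt (measure_pmf.expectation p (\<lambda>S. \<Sum>i\<in>S. (c i)\<^sup>2))"
    using A P by (intro mult_left_mono real_sqrt_le_mono sum_weight_mult_le_expectation)
      (auto simp: weight_def intro: sum_nonneg)
  finally show ?thesis
    using enn2real_sum by simp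
qed

lemma measurable_compose_countable_range:
  assumes "countable A" "g \<in> M \<rightarrow>\<^sub>M count_space UNIV" "\<And>x. x \<in> space M \<Longrightarrow> g x \<in> A"
    and "\<And>a. a \<in> A \<Longrightarrow> (\<lambda>x. f a x) \<in> M \<rightarrow>\<^sub>M N"
  shows "(\<lambda>x. f (g x) x) \<in> M \<rightarrow>\<^sub>M N"
proof (rule measurable_compose_countable'[OF assms(4) _ assms(1)])
  show "g \<in> M \<rightarrow>\<^sub>M count_space A"
    using assms(2,3) by (auto simp: measurable_count_space_eq_countable[OF assms(1)] measurable_def)
qed

lemma integral_le_sqrt_nn_integral_mult_sqrt_integral:
  fixes a :: "'a \<Rightarrow> ennreal" and b d :: "'a \<Rightarrow> real"
  assumes a: "a \<in> borel_measurable M" "(\<integral>\<^sup>+x. a x \<partial>M) \<noteq> \<infinity>"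
    and b: "integrable M b" "\<And>x. 0 \<le> b x"
    and d: "integrable M d" "\<And>x. 0 \<le> d x"
    and le: "\<And>x. x \<in> space M \<Longrightarrow> a x \<noteq> \<infinity> \<Longrightarrow> d x \<le> sqrt (enn2real (a x)) * sqrt (b x)"
  shows "(\<integral>x. d x \<partial>M) \<le> sqrt (enn2real (\<integral>\<^sup>+x. a x \<partial>M)) * sqrt (\<integral>x. b x \<partial>M)"
proof -
  define F where "F x = ennreal (sqrt (enn2real (a x)))" for x
  define G where "G x = ennreal (sqrt (b x))" for x
  have [measurable]: "a \<in> borel_measurable M" "b \<in> borel_measurable M"
    using a(1) borel_measurable_integrable[OF b(1)] .
  have [measurable]: "F \<in> borel_measurable M" "G \<in> borel_measurable M"
    unfolding F_def G_def by measurable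
  have a_finite: "AE x in M. a x \<noteq> \<infinity>"
    using nn_integral_PInf_AE[OF a] .
  have "AE x in M. ennreal (d x) \<le> F x * G x"
    using a_finite AE_space
    by eventually_elim (auto simp: F_def G_def b(2) le ennreal_mult[symmetric] intro: ennreal_leI)
  then have "(\<integral>\<^sup>+x. d x \<partial>M) \<le> (\<integral>\<^sup>+x. F x * G x \<partial>M)"
    by (rule nn_integral_mono_AE)
  then have "(\<integral>\<^sup>+x. d x \<partial>M)\<^sup>2 \<le> (\<integral>\<^sup>+x. F x ^ 2 \<partial>M) * (\<integral>\<^sup>+x. G x ^ 2 \<partial>M)"
    by (intro order_trans[OF power_mono Cauchy_Schwarz_nn_integral]) auto
  also have "(\<integral>\<^sup>+x. F x ^ 2 \<partial>M) = (\<integral>\<^sup>+x. a x \<partial>M)"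
    using a_finite
    by (intro nn_integral_cong_AE, eventually_elim) (simp add: F_def ennreal_power less_top)
  also have "(\<integral>\<^sup>+x. G x ^ 2 \<partial>M) = ennreal (\<integral>x. b x \<partial>M)"
    using b by (simp add: G_def ennreal_power nn_integral_eq_integral)
  also have "(\<integral>\<^sup>+x. a x \<partial>M) = ennreal (enn2real (\<integral>\<^sup>+x. a x \<partial>M))"
    using a(2) by (simp add: less_top)
  finally have "ennreal ((\<integral>x. d x \<partial>M)\<^sup>2) \<le> ennreal (enn2real (\<integral>\<^sup>+x. a x \<partial>M) * (\<integral>x. b x \<partial>M))"
    using d b by (simp add: nn_integral_eq_integral ennreal_power ennreal_mult' integral_nonneg_AE)
  then have "(\<integral>x. d x \<partial>M)\<^sup>2 \<le> enn2real (\<integral>\<^sup>+x. a x \<partial>M) * (\<integral>x. b x \<partial>M)"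
    using b by (simp add: integral_nonneg_AE)
  then show ?thesis
    by (simp add: real_le_rsqrt real_sqrt_mult[symmetric])
qed

lemma finite_assortments: "finite (assortments N K)"
  by (rule finite_subset[of _ "Pow {1..N}"]) (auto simp: assortments_def)

lemma assortment_subset: "S \<in> assortments N K \<Longrightarrow> S \<subseteq> {1..N}"
  by (simp add: assortments_def)

lemma finite_assortment: "S \<in> assortments N K \<Longrightarrow> finite S"
  by (meson assortment_subset finite_atLeastAtMost finite_subset)

lemma sum_assortment_le:
  fixes g :: "nat \<Rightarrow> real"
  assumes "S \<in> assortments N K" "\<And>i. i \<in> S \<Longrightarrow> g i \<le> 1"
  shows "(\<Sum>i\<in>S. g i) \<le> K"
proof -
  have "(\<Sum>i\<in>S. g i) \<le> card S"
    using assms(2) sum_mono[of S g "\<lambda>_. 1"] by simp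
  also have "card S \<le> K"
    using assms(1) by (simp add: assortments_def)
  finally show ?thesis by simp
qed

locale assortment_model = prob_space D
  for D :: "('x \<times> (nat \<Rightarrow> real)) measure" +
  fixes N K :: nat
    and f fstar :: "'x \<Rightarrow> nat \<Rightarrow> real"
    and q :: "'x \<times> (nat \<Rightarrow> real) \<Rightarrow> nat set pmf"
    and \<pi> :: "'x \<times> (nat \<Rightarrow> real) \<Rightarrow> nat set"
  assumes r_unit: "xr \<in> space D \<Longrightarrow> i \<in> {1..N} \<Longrightarrow> snd xr i \<in> {0..1}"
    and f_unit: "i \<in> {1..N} \<Longrightarrow> f x i \<in> {0..1}"
    and fstar_unit: "i \<in> {1..N} \<Longrightarrow> fstar x i \<in> {0..1}"
    and q_assortments: "set_pmf (q xr) \<subseteq> assortments N K"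
    and \<pi>_assortment: "\<pi> xr \<in> assortments N K"
    and measurable_r: "i \<in> {1..N} \<Longrightarrow> (\<lambda>xr. snd xr i) \<in> borel_measurable D"
    and measurable_f: "i \<in> {1..N} \<Longrightarrow> (\<lambda>xr. f (fst xr) i) \<in> borel_measurable D"
    and measurable_fstar: "i \<in> {1..N} \<Longrightarrow> (\<lambda>xr. fstar (fst xr) i) \<in> borel_measurable D"
    and measurable_pmf_q: "(\<lambda>xr. pmf (q xr) S) \<in> borel_measurable D"
    and measurable_\<pi>: "\<pi> \<in> D \<rightarrow>\<^sub>M count_space UNIV"
begin

lemma measurable_select_assortment:
  assumes "\<And>S. S \<in> assortments N K \<Longrightarrow> (\<lambda>xr. h S xr) \<in> D \<rightarrow>\<^sub>M M"
  shows "(\<lambda>xr. h (\<pi> xr) xr) \<in> D \<rightarrow>\<^sub>M M"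
  using countable_finite[OF finite_assortments] measurable_\<pi> \<pi>_assortment assms
  by (rule measurable_compose_countable_range)

lemma measurable_weight[measurable]: "(\<lambda>xr. weight (q xr) i) \<in> borel_measurable D"
  using measurable_pmf_q
  by (simp add: weight_eq_sum_pmf[OF finite_assortments q_assortments])

lemma measurable_inv_weight: "(\<lambda>xr. inv_weight (q xr) i) \<in> borel_measurable D"
  unfolding inv_weight_def by measurable

lemma integrable_revenue:
  assumes "\<And>x i. i \<in> {1..N} \<Longrightarrow> 0 \<le> v x i"
    and "\<And>i. i \<in> {1..N} \<Longrightarrow> (\<lambda>xr. v (fst xr) i) \<in> borel_measurable D"
  shows "integrable D (\<lambda>xr. revenue (\<pi> xr) (v (fst xr)) (snd xr))"
proof (rule integrable_const_bound[where B = 1])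
  show "AE xr in D. norm (revenue (\<pi> xr) (v (fst xr)) (snd xr)) \<le> 1"
  proof (rule AE_I2)
    fix xr assume "xr \<in> space D"
    then have "\<forall>i\<in>\<pi> xr. snd xr i \<in> {0..1}" "\<forall>i\<in>\<pi> xr. 0 \<le> v (fst xr) i"
      using r_unit assms(1) assortment_subset[OF \<pi>_assortment] by blast+
    then show "norm (revenue (\<pi> xr) (v (fst xr)) (snd xr)) \<le> 1"
      using revenue_nonneg revenue_le_one by (simp add: abs_le_iff)
  qed
  show "(\<lambda>xr. revenue (\<pi> xr) (v (fst xr)) (snd xr)) \<in> borel_measurable D"
  proof (rule measurable_select_assortment)
    fix S assume "S \<in> assortments N K"
    then have "i \<in> {1..N}" if "i \<in> S" for i
      using assortment_subset that by blast
    then show "(\<lambda>xr. revenue S (v (fst xr)) (snd xr)) \<in> borel_measurable D"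
      unfolding revenue_def
      by (intro borel_measurable_divide borel_measurable_add borel_measurable_sum
          borel_measurable_times borel_measurable_const measurable_r assms(2))
  qed
qed

lemma abs_gap_le_one: "i \<in> {1..N} \<Longrightarrow> \<bar>f x i - fstar x i\<bar> \<le> 1"
  using f_unit[of i x] fstar_unit[of i x] by auto

lemma expectation_q_eq_sum:
  fixes h :: "nat set \<Rightarrow> real"
  shows "measure_pmf.expectation (q xr) h = (\<Sum>S\<in>assortments N K. pmf (q xr) S * h S)"
  using q_assortments[of xr] by (subst integral_measure_pmf[OF finite_assortments]) auto

lemma integrable_l1_gap:
  "integrable D (\<lambda>xr. \<Sum>i\<in>\<pi> xr. \<bar>f (fst xr) i - fstar (fst xr) i\<bar>)"
proof (rule integrable_const_bound[where B = "real K"])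
  show "AE xr in D. norm (\<Sum>i\<in>\<pi> xr. \<bar>f (fst xr) i - fstar (fst xr) i\<bar>) \<le> real K"
    using abs_gap_le_one assortment_subset[OF \<pi>_assortment]
    by (intro AE_I2) (simp add: sum_nonneg sum_assortment_le[OF \<pi>_assortment] subset_iff)
  show "(\<lambda>xr. \<Sum>i\<in>\<pi> xr. \<bar>f (fst xr) i - fstar (fst xr) i\<bar>) \<in> borel_measurable D"
  proof (rule measurable_select_assortment)
    fix S assume "S \<in> assortments N K"
    then have "i \<in> {1..N}" if "i \<in> S" for i
      using assortment_subset that by blast
    then show "(\<lambda>xr. \<Sum>i\<in>S. \<bar>f (fst xr) i - fstar (fst xr) i\<bar>) \<in> borel_measurable D"
      by (intro borel_measurable_sum borel_measurable_abs borel_measurable_diff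
          measurable_f measurable_fstar)
  qed
qed

lemma integrable_sq_gap:
  "integrable D (\<lambda>xr. measure_pmf.expectation (q xr)
     (\<lambda>S. \<Sum>i\<in>S. (f (fst xr) i - fstar (fst xr) i)\<^sup>2))"
proof (rule integrable_const_bound[where B = "real K"])
  have "measure_pmf.expectation (q xr) (\<lambda>S. \<Sum>i\<in>S. (f (fst xr) i - fstar (fst xr) i)\<^sup>2) \<le> K" for xr
  proof (rule measure_pmf.integral_le_const)
    show "integrable (q xr) (\<lambda>S. \<Sum>i\<in>S. (f (fst xr) i - fstar (fst xr) i)\<^sup>2)"
      using q_assortments finite_assortments
      by (intro integrable_measure_pmf_finite) (rule finite_subset)
    show "AE S in q xr. (\<Sum>i\<in>S. (f (fst xr) i - fstar (fst xr) i)\<^sup>2) \<le> K"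
    proof (rule AE_measure_pmf_iff[THEN iffD2], intro ballI)
      fix S assume "S \<in> set_pmf (q xr)"
      then have S: "S \<in> assortments N K"
        using q_assortments[of xr] by blast
      show "(\<Sum>i\<in>S. (f (fst xr) i - fstar (fst xr) i)\<^sup>2) \<le> K"
        using assortment_subset[OF S] abs_gap_le_one
        by (intro sum_assortment_le[OF S]) (auto simp: abs_square_le_1)
    qed
  qed
  then show "AE xr in D. norm (measure_pmf.expectation (q xr)
      (\<lambda>S. \<Sum>i\<in>S. (f (fst xr) i - fstar (fst xr) i)\<^sup>2)) \<le> real K"
    by (intro AE_I2) (simp add: integral_nonneg_AE sum_nonneg)
  have "i \<in> {1..N}" if "S \<in> assortments N K" "i \<in> S" for S i
    using assortment_subset that by blast
  then show "(\<lambda>xr. measure_pmf.expectation (q xr)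
      (\<lambda>S. \<Sum>i\<in>S. (f (fst xr) i - fstar (fst xr) i)\<^sup>2)) \<in> borel_measurable D"
    unfolding expectation_q_eq_sum
    by (intro borel_measurable_sum borel_measurable_times measurable_pmf_q borel_measurable_power
        borel_measurable_diff measurable_f measurable_fstar)
qed

lemma revenue_gap_le_l1_gap:
  "\<bar>(\<integral>xr. revenue (\<pi> xr) (f (fst xr)) (snd xr) \<partial>D)
     - (\<integral>xr. revenue (\<pi> xr) (fstar (fst xr)) (snd xr) \<partial>D)\<bar>
   \<le> (\<integral>xr. (\<Sum>i\<in>\<pi> xr. \<bar>f (fst xr) i - fstar (fst xr) i\<bar>) \<partial>D)"
proof -
  let ?Rf = "\<lambda>xr. revenue (\<pi> xr) (f (fst xr)) (snd xr)"
  let ?Rs = "\<lambda>xr. revenue (\<pi> xr) (fstar (fst xr)) (snd xr)"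
  have int: "integrable D ?Rf" "integrable D ?Rs"
    using f_unit fstar_unit
    by (intro integrable_revenue measurable_f measurable_fstar; simp)+
  have "\<bar>(\<integral>xr. ?Rf xr \<partial>D) - (\<integral>xr. ?Rs xr \<partial>D)\<bar> = \<bar>\<integral>xr. ?Rf xr - ?Rs xr \<partial>D\<bar>"
    using int by simp
  also have "\<dots> \<le> (\<integral>xr. \<bar>?Rf xr - ?Rs xr\<bar> \<partial>D)"
    using integral_norm_bound[of D "\<lambda>xr. ?Rf xr - ?Rs xr"] by simp
  also have "\<dots> \<le> (\<integral>xr. (\<Sum>i\<in>\<pi> xr. \<bar>f (fst xr) i - fstar (fst xr) i\<bar>) \<partial>D)"
  proof (rule integral_mono[OF _ integrable_l1_gap])
    show "integrable D (\<lambda>xr. \<bar>?Rf xr - ?Rs xr\<bar>)"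
      using int by (intro integrable_abs Bochner_Integration.integrable_diff)
    fix xr assume xr: "xr \<in> space D"
    have "snd xr i \<in> {0..1}" "f (fst xr) i \<in> {0..1}" "fstar (fst xr) i \<in> {0..1}"
      if "i \<in> \<pi> xr" for i
    proof -
      have "i \<in> {1..N}"
        using assortment_subset[OF \<pi>_assortment] that by blast
      then show "snd xr i \<in> {0..1}" "f (fst xr) i \<in> {0..1}" "fstar (fst xr) i \<in> {0..1}"
        by (simp_all only: r_unit[OF xr] f_unit fstar_unit)
    qed
    then show "\<bar>?Rf xr - ?Rs xr\<bar> \<le> (\<Sum>i\<in>\<pi> xr. \<bar>f (fst xr) i - fstar (fst xr) i\<bar>)"
      by (intro abs_revenue_diff_le) auto
  qed
  finally show ?thesis .
qed

lemma l1_gap_le_sqrt_dispersion: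
  assumes "dispersion D q \<pi> \<noteq> \<infinity>"
  shows "(\<integral>xr. (\<Sum>i\<in>\<pi> xr. \<bar>f (fst xr) i - fstar (fst xr) i\<bar>) \<partial>D)
    \<le> sqrt (enn2real (dispersion D q \<pi>)) *
       sqrt (\<integral>xr. measure_pmf.expectation (q xr)
               (\<lambda>S. \<Sum>i\<in>S. (f (fst xr) i - fstar (fst xr) i)\<^sup>2) \<partial>D)"
  unfolding dispersion_def
proof (rule integral_le_sqrt_nn_integral_mult_sqrt_integral
    [OF _ _ integrable_sq_gap _ integrable_l1_gap])
  show "(\<lambda>xr. \<Sum>i\<in>\<pi> xr. inv_weight (q xr) i) \<in> borel_measurable D"
    by (rule measurable_select_assortment) (intro borel_measurable_sum measurable_inv_weight)
  show "(\<integral>\<^sup>+xr. (\<Sum>i\<in>\<pi> xr. inv_weight (q xr) i) \<partial>D) \<noteq> \<infinity>"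
    using assms by (simp add: dispersion_def)
  show "(\<Sum>i\<in>\<pi> xr. \<bar>f (fst xr) i - fstar (fst xr) i\<bar>)
      \<le> sqrt (enn2real (\<Sum>i\<in>\<pi> xr. inv_weight (q xr) i))
       * sqrt (measure_pmf.expectation (q xr) (\<lambda>S. \<Sum>i\<in>S. (f (fst xr) i - fstar (fst xr) i)\<^sup>2))"
    if "(\<Sum>i\<in>\<pi> xr. inv_weight (q xr) i) \<noteq> \<infinity>" for xr
    using finite_assortments q_assortments[of xr] finite_assortment
      finite_assortment[OF \<pi>_assortment] that
    by (rule sum_abs_le_sqrt_inv_weight_mult_sqrt_expectation)
qed (auto simp: integral_nonneg_AE sum_nonneg)

end

theorem lemma2:
  fixes N K :: nat
    and D :: "('x \<times> (nat \<Rightarrow> real)) measure"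
    and f fstar :: "'x \<Rightarrow> nat \<Rightarrow> real"
    and q :: "'x \<times> (nat \<Rightarrow> real) \<Rightarrow> nat set pmf"
    and \<pi> :: "'x \<times> (nat \<Rightarrow> real) \<Rightarrow> nat set"
  assumes "1 \<le> K" and "K \<le> N"
    and "prob_space D"
    and "\<forall>xr\<in>space D. \<forall>i\<in>{1..N}. snd xr i \<in> {0..1}"
    and "\<forall>x. \<forall>i\<in>{1..N}. f x i \<in> {0..1}"
    and "\<forall>x. \<forall>i\<in>{1..N}. fstar x i \<in> {0..1}"
    and "\<forall>xr. set_pmf (q xr) \<subseteq> assortments N K"
    and "\<forall>xr. \<pi> xr \<in> assortments N K"
    and "\<forall>i\<in>{1..N}. (\<lambda>xr. snd xr i) \<in> borel_measurable D"
    and "\<forall>i\<in>{1..N}. (\<lambda>xr. f (fst xr) i) \<in> borel_measurable D"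
    and "\<forall>i\<in>{1..N}. (\<lambda>xr. fstar (fst xr) i) \<in> borel_measurable D"
    and "\<forall>S. (\<lambda>xr. pmf (q xr) S) \<in> borel_measurable D"
    and "\<pi> \<in> measurable D (count_space UNIV)"
  shows "dispersion D q \<pi> = \<infinity> \<or>
    \<bar>(\<integral>xr. revenue (\<pi> xr) (f (fst xr)) (snd xr) \<partial>D)
      - (\<integral>xr. revenue (\<pi> xr) (fstar (fst xr)) (snd xr) \<partial>D)\<bar>
    \<le> sqrt (enn2real (dispersion D q \<pi>)) *
       sqrt (\<integral>xr. measure_pmf.expectation (q xr)
               (\<lambda>S. \<Sum>i\<in>S. (f (fst xr) i - fstar (fst xr) i)\<^sup>2) \<partial>D)"
proof (cases "dispersion D q \<pi> = \<infinity>")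
  case False
  interpret assortment_model D N K f fstar q \<pi>
    using assms(3-)
    by (intro assortment_model.intro assortment_model_axioms.intro)
      (simp_all del: split_paired_All)
  show ?thesis
    using order_trans[OF revenue_gap_le_l1_gap l1_gap_le_sqrt_dispersion[OF False]] by simp
qed simp

end
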